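(* Let $r:\mathfrak h^*\to\wedge^2\mathfrak g$ be a triangular dynamical $r$-matrix. The following are equivalent: (i) $r$ is splittable, i.e. $i^*\big(r(\lambda)^{\#-1}(\mathfrak h)\big)=\mathfrak h^*$ for every $\lambda\in\mathfrak h^*$, where $r(\lambda)^{\#-1}(\mathfrak h)=\{\xi\in\mathfrak g^*: r(\lambda)^\#\xi\in\mathfrak h\}$; (ii) $r(\lambda)^\#\mathfrak g^*\subset\mathfrak g_\lambda$ for every $\lambda\in\mathfrak h^*$; (iii) for every linear complement $\mathfrak m$ of $\mathfrak h$ in $\mathfrak g$ and every basis $e_1,\dots,e_m$ of $\mathfrak m$, writing $r(\lambda)=\sum a^{ij}(\lambda)h_i\wedge h_j+\sum b^{ij}(\lambda)h_i\wedge e_j+\sum c^{ij}(\lambda)e_i\wedge e_j$ with $a^{ij}=-a^{ji}$, $c^{ij}=-c^{ji}$, one has $\sum_j b^{ij}(\lambda)e_j\in\mathrm{Span}\{\sum_j c^{kj}(\lambda)e_j: k=1,\dots,m\}$ for all $i$ and all $\lambda$; (iv) for each $\lambda\in\mathfrak h^*$ there exist a linear complement $\mathfrak m$ of $\mathfrak h$ in $\mathfrak g$ and a basis $e_1,\dots,e_m$ of $\mathfrak m$ such that $r(\lambda)=\sum a^{ij}(\lambda)h_i\wedge h_j+\sum c^{ij}(\lambda)e_i\wedge e_j$; (v) $T\mathfrak h^*\times\{0\}\subset B$, where $B=\Lambda^\#(A^* )\subset A$.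
   Context: Let $\mathfrak g$ be a finite-dimensional real Lie algebra and $\mathfrak h\subset\mathfrak g$ an abelian Lie subalgebra of dimension $l$ with basis $h_1,\dots,h_l$; $(\lambda^1,\dots,\lambda^l)$ are the induced coordinates on $\mathfrak h^*$. A triangular dynamical $r$-matrix is a smooth map $r:\mathfrak h^*\to\wedge^2\mathfrak g$ with $[h,r(\lambda)]=0$ for $h\in\mathfrak h$ and $\sum_i h_i\wedge\frac{\partial r}{\partial\lambda^i}+\frac12[r,r]=0$ (Schouten-type bracket on $\wedge^\bullet\mathfrak g$). For $\rho\in\wedge^2\mathfrak g$, $\rho^\#:\mathfrak g^*\to\mathfrak g$ is $\langle\rho^\#\xi,\eta\rangle=\rho(\xi,\eta)$; $\mathfrak h^\perp\subset\mathfrak g^*$ is the annihilator of $\mathfrak h$; $i^*:\mathfrak g^*\to\mathfrak h^*$ is restriction; $\mathfrak g_\lambda=\mathfrak h+r(\lambda)^\#\mathfrak h^\perp$. $A=T\mathfrak h^*\times\mathfrak g$ is the bundle over $\mathfrak h^*$ with fiber $A_\lambda\cong\mathfrak h^*\oplus\mathfrak g$, $A^*_\lambda\cong\mathfrak h\oplus\mathfrak g^*$, and $\Lambda^\#:A^*\to A$ is $\Lambda^\#_\lambda(h,\xi)=(i^*\xi,-h+r(\lambda)^\#\xi)$. *)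

theory Defs
  imports "HOL-Analysis.Analysis"
begin

(* Conventions.
   - The finite-dimensional real Lie algebra g is modelled by a type 'g :: euclidean_space
     with a bracket  br :: 'g => 'g => 'g.
   - The dual g^* is identified with 'g via the inner product: a vector x stands for
     the functional u |-> x \<bullet> u.  (Every functional on 'g is of this form.)
   - An element rho of wedge^2 g is a skew bilinear form on g^*, i.e. a skew bilinear
     map 'g => 'g => real; u /\ v is (xi,eta) |-> xi(u) eta(v) - xi(v) eta(u).
     wedge^3 g: skew trilinear forms on g^*, u/\v/\w given by the 3x3 determinant.
   - h has basis hb :: 'l => 'g; h^* is identified with real^'l via the coordinates
     lambda^i(mu) = mu(h_i). *)

definition lie_algebra :: "('g::real_vector \<Rightarrow> 'g \<Rightarrow> 'g) \<Rightarrow> bool" where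
  "lie_algebra br \<longleftrightarrow> bilinear br \<and> (\<forall>x. br x x = 0) \<and>
     (\<forall>x y z. br x (br y z) + br y (br z x) + br z (br x y) = 0)"

definition hsub :: "('l \<Rightarrow> 'g::real_vector) \<Rightarrow> 'g set" where
  "hsub hb = span (range hb)"

definition abelian_subalgebra_basis :: "('g::real_vector \<Rightarrow> 'g \<Rightarrow> 'g) \<Rightarrow> ('l \<Rightarrow> 'g) \<Rightarrow> bool" where
  "abelian_subalgebra_basis br hb \<longleftrightarrow> independent (range hb) \<and> inj hb \<and>
     (\<forall>x\<in>hsub hb. \<forall>y\<in>hsub hb. br x y = 0)"

definition covec :: "('g::euclidean_space \<Rightarrow> real) \<Rightarrow> 'g" where
  "covec \<phi> = (\<Sum>b\<in>Basis. \<phi> b *\<^sub>R b)"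

definition wedge2 :: "'g::euclidean_space \<Rightarrow> 'g \<Rightarrow> 'g \<Rightarrow> 'g \<Rightarrow> real" where
  "wedge2 u v = (\<lambda>x y. (x \<bullet> u) * (y \<bullet> v) - (x \<bullet> v) * (y \<bullet> u))"

definition wedge3 :: "'g::euclidean_space \<Rightarrow> 'g \<Rightarrow> 'g \<Rightarrow> 'g \<Rightarrow> 'g \<Rightarrow> 'g \<Rightarrow> real" where
  "wedge3 u v w = (\<lambda>x y z.
      (x \<bullet> u) * ((y \<bullet> v) * (z \<bullet> w) - (y \<bullet> w) * (z \<bullet> v))
    - (y \<bullet> u) * ((x \<bullet> v) * (z \<bullet> w) - (x \<bullet> w) * (z \<bullet> v))
    + (z \<bullet> u) * ((x \<bullet> v) * (y \<bullet> w) - (x \<bullet> w) * (y \<bullet> v)))"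

definition wedge_vec2 :: "'g::euclidean_space \<Rightarrow> ('g \<Rightarrow> 'g \<Rightarrow> real) \<Rightarrow> 'g \<Rightarrow> 'g \<Rightarrow> 'g \<Rightarrow> real" where
  "wedge_vec2 u \<rho> = (\<lambda>x y z. (x \<bullet> u) * \<rho> y z - (y \<bullet> u) * \<rho> x z + (z \<bullet> u) * \<rho> x y)"

definition is_wedge2 :: "('g::euclidean_space \<Rightarrow> 'g \<Rightarrow> real) \<Rightarrow> bool" where
  "is_wedge2 \<rho> \<longleftrightarrow> bilinear \<rho> \<and> (\<forall>x y. \<rho> x y = - \<rho> y x)"

(* rho^# : g^* -> g,  <rho^# xi, eta> = rho(xi, eta) *)
definition sharp :: "('g::euclidean_space \<Rightarrow> 'g \<Rightarrow> real) \<Rightarrow> 'g \<Rightarrow> 'g" where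
  "sharp \<rho> \<xi> = (\<Sum>b\<in>Basis. \<rho> \<xi> b *\<^sub>R b)"

(* adjoint action [h, rho] of h in g on rho in wedge^2 g
   (extension of ad_h as a derivation: [h, u/\v] = [h,u]/\v + u/\[h,v]) *)
definition ad_wedge2 :: "('g::euclidean_space \<Rightarrow> 'g \<Rightarrow> 'g) \<Rightarrow> 'g \<Rightarrow> ('g \<Rightarrow> 'g \<Rightarrow> real) \<Rightarrow> 'g \<Rightarrow> 'g \<Rightarrow> real" where
  "ad_wedge2 br h \<rho> = (\<lambda>x y. \<rho> (covec (\<lambda>u. x \<bullet> br h u)) y + \<rho> x (covec (\<lambda>u. y \<bullet> br h u)))"

(* Schouten bracket of two bivectors: with rho = 1/2 sum_{a,b} rho(a,b) a/\b (orthonormal basis)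
   and [X1/\X2, Y1/\Y2] = [X1,Y1]/\X2/\Y2 - [X1,Y2]/\X2/\Y1 - [X2,Y1]/\X1/\Y2 + [X2,Y2]/\X1/\Y1 *)
definition schouten :: "('g::euclidean_space \<Rightarrow> 'g \<Rightarrow> 'g) \<Rightarrow> ('g \<Rightarrow> 'g \<Rightarrow> real) \<Rightarrow> ('g \<Rightarrow> 'g \<Rightarrow> real)
     \<Rightarrow> 'g \<Rightarrow> 'g \<Rightarrow> 'g \<Rightarrow> real" where
  "schouten br \<rho> \<sigma> = (\<lambda>x y z. \<Sum>a\<in>Basis. \<Sum>b\<in>Basis. \<Sum>c\<in>Basis. \<Sum>d\<in>Basis.
      (1/4) * \<rho> a b * \<sigma> c d *
        (wedge3 (br a c) b d x y z - wedge3 (br a d) b c x y z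
         - wedge3 (br b c) a d x y z + wedge3 (br b d) a c x y z))"

definition pderiv_coord :: "'l \<Rightarrow> (real^'l \<Rightarrow> real) \<Rightarrow> real^'l \<Rightarrow> real" where
  "pderiv_coord i f la = frechet_derivative f (at la) (axis i 1)"

coinductive smooth_fun :: "(real^'l \<Rightarrow> real) \<Rightarrow> bool" where
  "(\<forall>la. f differentiable (at la)) \<Longrightarrow> (\<forall>i. smooth_fun (pderiv_coord i f)) \<Longrightarrow> smooth_fun f"

definition triangular_dynamical_r_matrix ::
  "('g::euclidean_space \<Rightarrow> 'g \<Rightarrow> 'g) \<Rightarrow> ('l::finite \<Rightarrow> 'g) \<Rightarrow> (real^'l \<Rightarrow> 'g \<Rightarrow> 'g \<Rightarrow> real) \<Rightarrow> bool" where
  "triangular_dynamical_r_matrix br hb r \<longleftrightarrow>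
     (\<forall>la. is_wedge2 (r la)) \<and>
     (\<forall>\<xi> \<eta>. smooth_fun (\<lambda>la. r la \<xi> \<eta>)) \<and>
     (\<forall>la. \<forall>h\<in>hsub hb. ad_wedge2 br h (r la) = (\<lambda>x y. 0)) \<and>
     (\<forall>la x y z. (\<Sum>i\<in>UNIV. wedge_vec2 (hb i) (\<lambda>\<xi> \<eta>. pderiv_coord i (\<lambda>\<mu>. r \<mu> \<xi> \<eta>) la) x y z)
                 + (1/2) * schouten br (r la) (r la) x y z = 0)"

definition hperp :: "('l \<Rightarrow> 'g::euclidean_space) \<Rightarrow> 'g set" where
  "hperp hb = {\<xi>. \<forall>x\<in>hsub hb. \<xi> \<bullet> x = 0}"

definition istar :: "('l::finite \<Rightarrow> 'g::euclidean_space) \<Rightarrow> 'g \<Rightarrow> real^'l" where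
  "istar hb \<xi> = (\<chi> i. \<xi> \<bullet> hb i)"

definition g_lambda :: "('l \<Rightarrow> 'g::euclidean_space) \<Rightarrow> ('g \<Rightarrow> 'g \<Rightarrow> real) \<Rightarrow> 'g set" where
  "g_lambda hb \<rho> = {x + sharp \<rho> \<eta> | x \<eta>. x \<in> hsub hb \<and> \<eta> \<in> hperp hb}"

definition Lambda_sharp :: "('l::finite \<Rightarrow> 'g::euclidean_space) \<Rightarrow> (real^'l \<Rightarrow> 'g \<Rightarrow> 'g \<Rightarrow> real)
     \<Rightarrow> real^'l \<Rightarrow> 'g \<times> 'g \<Rightarrow> (real^'l) \<times> 'g" where
  "Lambda_sharp hb r la p = (istar hb (snd p), - fst p + sharp (r la) (snd p))"

(* B = Lambda^#(A^* ) inside A = T h^* x g, as set of pairs (base point, fibre element);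
   A^*_lambda = h (+) g^* *)
definition Bset :: "('l::finite \<Rightarrow> 'g::euclidean_space) \<Rightarrow> (real^'l \<Rightarrow> 'g \<Rightarrow> 'g \<Rightarrow> real)
     \<Rightarrow> ((real^'l) \<times> ((real^'l) \<times> 'g)) set" where
  "Bset hb r = {(la, Lambda_sharp hb r la (h, \<xi>)) | la h \<xi>. h \<in> hsub hb}"

definition lin_complement :: "'g::real_vector set \<Rightarrow> 'g set \<Rightarrow> bool" where
  "lin_complement H M \<longleftrightarrow> subspace M \<and> H \<inter> M = {0} \<and> {x + y | x y. x \<in> H \<and> y \<in> M} = UNIV"

definition basis_of :: "(nat \<Rightarrow> 'g::real_vector) \<Rightarrow> nat \<Rightarrow> 'g set \<Rightarrow> bool" where
  "basis_of e m M \<longleftrightarrow> inj_on e {..<m} \<and> independent (e ` {..<m}) \<and> span (e ` {..<m}) = M"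

end

theory Submission
  imports Defs
begin

(*
  Everything is pointwise in lambda and uses only that rho = r(lambda) is a skew bilinear
  form on g^*: neither the bracket nor the dynamical Yang-Baxter equation enters.

  Fix a complement M of h with basis e and expand
  rho = sum a h/\h + sum b h/\e + sum c e/\e.  For a covector xi, the M-component of
  rho^# xi is  sum_i xi(h_i) B_i + 2 sum_k xi(e_k) C_k,  where B_i = sum_j b^ij e_j and
  C_k = sum_j c^kj e_j.  Since the values xi(h_i) and xi(e_k) can be prescribed
  independently, every restriction i^* xi is attained with rho^# xi in h exactly when each
  B_i lies in the span of the C_k; this is (i) <-> (iii), and (iv) is the case B = 0.
  Conversely, given (i), pick X_i with X_i(h_j) = delta_ij and rho^# X_i in h.  In the
  complement annihilated by the X_i, with dual covectors eta_k vanishing on h, the mixed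
  coefficients rho(X_i, eta_k) = eta_k(rho^# X_i) vanish.  (ii) and (v) merely
  reformulate (i).
*)

definition splittable :: "('l::finite \<Rightarrow> 'g::euclidean_space) \<Rightarrow> ('g \<Rightarrow> 'g \<Rightarrow> real) \<Rightarrow> bool" where
  "splittable hb \<rho> \<longleftrightarrow> istar hb ` {\<xi>. sharp \<rho> \<xi> \<in> hsub hb} = UNIV"

definition bivector_expansion ::
  "('l::finite \<Rightarrow> 'g::euclidean_space) \<Rightarrow> (nat \<Rightarrow> 'g) \<Rightarrow> nat \<Rightarrow> ('l \<Rightarrow> 'l \<Rightarrow> real)
     \<Rightarrow> ('l \<Rightarrow> nat \<Rightarrow> real) \<Rightarrow> (nat \<Rightarrow> nat \<Rightarrow> real) \<Rightarrow> ('g \<Rightarrow> 'g \<Rightarrow> real) \<Rightarrow> bool" where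
  "bivector_expansion hb e m a b c \<rho> \<longleftrightarrow>
     (\<forall>x y. \<rho> x y = (\<Sum>i\<in>UNIV. \<Sum>j\<in>UNIV. a i j * wedge2 (hb i) (hb j) x y)
                   + (\<Sum>i\<in>UNIV. \<Sum>j<m. b i j * wedge2 (hb i) (e j) x y)
                   + (\<Sum>i<m. \<Sum>j<m. c i j * wedge2 (e i) (e j) x y))"

lemma is_wedge2_skew: "is_wedge2 \<rho> \<Longrightarrow> \<rho> x y = - \<rho> y x"
  unfolding is_wedge2_def by blast

lemma inner_sharp:
  fixes \<rho> :: "'g::euclidean_space \<Rightarrow> 'g \<Rightarrow> real"
  assumes "is_wedge2 \<rho>"
  shows "z \<bullet> sharp \<rho> \<xi> = \<rho> \<xi> z"
proof -
  have l: "linear (\<lambda>y. \<rho> \<xi> y)"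
    using assms unfolding is_wedge2_def bilinear_def by blast
  have "\<rho> \<xi> z = \<rho> \<xi> (\<Sum>b\<in>Basis. (z \<bullet> b) *\<^sub>R b)"
    by (simp add: euclidean_representation)
  also have "\<dots> = (\<Sum>b\<in>Basis. (z \<bullet> b) * \<rho> \<xi> b)"
    by (simp only: linear_sum[OF l] linear_scale[OF l] real_scaleR_def)
  finally show ?thesis
    by (simp add: sharp_def inner_sum_right mult.commute)
qed

lemma sharp_eqI:
  fixes \<rho> :: "'g::euclidean_space \<Rightarrow> 'g \<Rightarrow> real"
  assumes "is_wedge2 \<rho>" and "\<And>y. \<rho> \<xi> y = y \<bullet> v"
  shows "sharp \<rho> \<xi> = v"
  using inner_sharp[OF assms(1)] assms(2) vector_eq_ldot by metis

lemma linear_sharp: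
  fixes \<rho> :: "'g::euclidean_space \<Rightarrow> 'g \<Rightarrow> real"
  assumes w: "is_wedge2 \<rho>"
  shows "linear (sharp \<rho>)"
proof (rule linearI)
  have l: "linear (\<lambda>x. \<rho> x y)" for y
    using w unfolding is_wedge2_def bilinear_def by blast
  fix \<xi> \<xi>' :: 'g and s :: real
  show "sharp \<rho> (\<xi> + \<xi>') = sharp \<rho> \<xi> + sharp \<rho> \<xi>'"
    by (rule sharp_eqI[OF w]) (simp add: inner_sharp[OF w] inner_add_right linear_add[OF l])
  show "sharp \<rho> (s *\<^sub>R \<xi>) = s *\<^sub>R sharp \<rho> \<xi>"
    by (rule sharp_eqI[OF w]) (simp add: inner_sharp[OF w] linear_scale[OF l])
qed

lemma covector_extend:
  fixes B :: "'g::euclidean_space set"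
  assumes "independent B"
  shows "\<exists>\<xi>. \<forall>v\<in>B. \<xi> \<bullet> v = f v"
proof -
  obtain \<phi> :: "'g \<Rightarrow> real" where \<phi>: "linear \<phi>" "\<forall>v\<in>B. \<phi> v = f v"
    using linear_independent_extend[OF assms] by blast
  show ?thesis
  proof (intro exI ballI)
    fix v assume "v \<in> B"
    \<comment> \<open>\<open>adjoint \<phi> 1\<close> is the Riesz representative of \<open>\<phi>\<close>\<close>
    then show "adjoint \<phi> 1 \<bullet> v = f v"
      using adjoint_works[OF \<phi>(1), of v 1] \<phi>(2) by (simp add: inner_commute)
  qed
qed

lemma istar_eq_iff: "istar hb \<xi> = \<mu> \<longleftrightarrow> (\<forall>i. \<xi> \<bullet> hb i = \<mu> $ i)"
  by (auto simp: istar_def vec_eq_iff)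

lemma istar_diff: "istar hb (\<xi> - \<eta>) = istar hb \<xi> - istar hb \<eta>"
  by (simp add: istar_def vec_eq_iff inner_diff_left)

lemma inner_hsub_eq_0:
  fixes hb :: "'l \<Rightarrow> 'g::euclidean_space"
  assumes "\<And>i. v \<bullet> hb i = 0" and "x \<in> hsub hb"
  shows "v \<bullet> x = 0"
  using orthogonal_to_span[of x "range hb" v] assms unfolding hsub_def orthogonal_def by auto

lemma hperp_iff_istar_eq_0: "\<eta> \<in> hperp hb \<longleftrightarrow> istar hb \<eta> = 0"
proof
  assume "\<eta> \<in> hperp hb"
  then show "istar hb \<eta> = 0"
    unfolding hperp_def istar_eq_iff hsub_def by (simp add: span_base)
next
  assume "istar hb \<eta> = 0"
  then show "\<eta> \<in> hperp hb"
    unfolding hperp_def istar_eq_iff by (auto intro: inner_hsub_eq_0)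
qed

lemma istar_surj:
  fixes hb :: "'l::finite \<Rightarrow> 'g::euclidean_space"
  assumes "independent (range hb)" and "inj hb"
  obtains \<xi> where "istar hb \<xi> = \<mu>"
proof -
  obtain \<xi> where "\<forall>v\<in>range hb. \<xi> \<bullet> v = \<mu> $ inv hb v"
    using covector_extend[OF assms(1), of "\<lambda>v. \<mu> $ inv hb v"] by blast
  then have "istar hb \<xi> = \<mu>"
    by (simp add: istar_eq_iff inv_f_f[OF assms(2)])
  then show thesis ..
qed

lemma dual_covectors_exist:
  fixes hb :: "'l::finite \<Rightarrow> 'g::euclidean_space"
  assumes "independent (range hb)" and "inj hb"
  obtains X where "\<And>i j. X i \<bullet> hb j = (if i = j then 1 else 0)"
proof -
  have "\<exists>\<xi>. istar hb \<xi> = axis i 1" for i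
    using istar_surj[OF assms] by blast
  then obtain X where "\<And>i. istar hb (X i) = axis i 1"
    by metis
  then have "X i \<bullet> hb j = (if i = j then 1 else 0)" for i j
    by (simp add: istar_eq_iff axis_def)
  then show thesis ..
qed

lemma splittable_dual_covectors:
  fixes hb :: "'l::finite \<Rightarrow> 'g::euclidean_space"
  assumes "splittable hb \<rho>"
  obtains X where "\<And>i j. X i \<bullet> hb j = (if i = j then 1 else 0)" and "\<And>i. sharp \<rho> (X i) \<in> hsub hb"
proof -
  have "\<exists>\<xi>. istar hb \<xi> = axis i 1 \<and> sharp \<rho> \<xi> \<in> hsub hb" for i
  proof -
    have "axis i 1 \<in> istar hb ` {\<xi>. sharp \<rho> \<xi> \<in> hsub hb}"
      using assms by (simp add: splittable_def)
    then show ?thesis by auto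
  qed
  then obtain X where X: "\<And>i. istar hb (X i) = axis i 1" "\<And>i. sharp \<rho> (X i) \<in> hsub hb"
    by metis
  moreover have "X i \<bullet> hb j = (if i = j then 1 else 0)" for i j
    using X(1) by (simp add: istar_eq_iff axis_def)
  ultimately show thesis
    using that by blast
qed

lemma independent_Un:
  fixes S T :: "'g::real_vector set"
  assumes "independent S" "independent T" "span S \<inter> span T = {0}"
  shows "independent (S \<union> T)"
proof -
  have notin: "a \<notin> span ((S \<union> T) - {a})"
    if "independent S" "span S \<inter> span T = {0}" "a \<in> S" for S T and a :: 'g
  proof
    assume "a \<in> span ((S \<union> T) - {a})"
    also have "\<dots> \<subseteq> span ((S - {a}) \<union> T)" by (rule span_mono) auto
    finally obtain s t where st: "a = s + t" "s \<in> span (S - {a})" "t \<in> span T"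
      unfolding span_Un by blast
    have "t = a - s" using st(1) by simp
    moreover have "a - s \<in> span S"
      using st(2) span_mono[of "S - {a}" S] \<open>a \<in> S\<close> by (auto intro: span_diff span_base)
    ultimately have "t = 0" using st(3) that(2) by blast
    then have "a \<in> span (S - {a})" using st by simp
    then show False using that(1,3) dependent_def by blast
  qed
  have "a \<notin> span ((S \<union> T) - {a})" if "a \<in> S \<union> T" for a
  proof (cases "a \<in> S")
    case True
    then show ?thesis using notin assms(1,3) by blast
  next
    case False
    then have "a \<notin> span ((T \<union> S) - {a})"
      using notin[of T S a] assms(2,3) that by (simp add: Int_commute)
    then show ?thesis by (simp add: Un_commute)
  qed
  then show ?thesis
    using dependent_def by blast
qed

lemma span_family_coeffs:
  fixes f :: "nat \<Rightarrow> 'g::real_vector"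
  assumes "x \<in> span {f k | k. k < m}"
  obtains \<gamma> where "x = (\<Sum>k<m. \<gamma> k *\<^sub>R f k)"
  using assms
proof (induction arbitrary: thesis rule: span_induct_alt)
  case base
  show ?case by (rule base[of "\<lambda>_. 0"]) simp
next
  case (step s v y)
  obtain j where j: "j < m" "v = f j" using step.hyps by blast
  obtain \<gamma> where \<gamma>: "y = (\<Sum>k<m. \<gamma> k *\<^sub>R f k)" using step.IH by blast
  have "(\<Sum>k<m. (if k = j then s else 0) *\<^sub>R f k) = (\<Sum>k<m. if k = j then s *\<^sub>R f k else 0)"
    by (intro sum.cong) auto
  also have "\<dots> = s *\<^sub>R v" using j by simp
  finally have "s *\<^sub>R v + y = (\<Sum>k<m. (\<gamma> k + (if k = j then s else 0)) *\<^sub>R f k)"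
    by (simp add: \<gamma> scaleR_add_left sum.distrib)
  then show ?case by (rule step.prems)
qed

lemma basis_of_exists:
  fixes M :: "'g::euclidean_space set"
  assumes "subspace M"
  obtains e m where "basis_of e m M"
proof -
  obtain B where B: "independent B" "span B = M"
    using orthonormal_basis_subspace[OF assms] by metis
  obtain es where es: "set es = B" "distinct es"
    using finite_distinct_list[OF independent_imp_finite[OF B(1)]] by blast
  have "(!) es ` {..<length es} = B"
    unfolding es(1)[symmetric] by (force simp: in_set_conv_nth)
  moreover have "inj_on ((!) es) {..<length es}"
    by (rule inj_on_nth[OF es(2)]) simp
  ultimately show thesis
    using B by (intro that[of "(!) es" "length es"]) (simp add: basis_of_def)
qed

lemma dual_sum_eq_hsub:
  fixes hb :: "'l::finite \<Rightarrow> 'g::euclidean_space"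
  assumes dual: "\<And>i j. X i \<bullet> hb j = (if i = j then 1 else 0)" and "x \<in> hsub hb"
  shows "(\<Sum>i\<in>UNIV. (X i \<bullet> x) *\<^sub>R hb i) = x"
proof (rule linear_eq_on[where f = "\<lambda>x. \<Sum>i\<in>UNIV. (X i \<bullet> x) *\<^sub>R hb i" and g = "\<lambda>x. x"])
  show "linear (\<lambda>x. \<Sum>i\<in>UNIV. (X i \<bullet> x) *\<^sub>R hb i)"
    by (rule linearI) (simp_all add: inner_add_right scaleR_add_left sum.distrib scaleR_sum_right)
  show "linear (\<lambda>x. x)" by (rule linear_ident)
  show "x \<in> span (range hb)" using assms(2) by (simp add: hsub_def)
next
  fix b assume "b \<in> range hb"
  then obtain j where j: "b = hb j" by blast
  have "(\<Sum>i\<in>UNIV. (X i \<bullet> hb j) *\<^sub>R hb i) = (\<Sum>i\<in>UNIV. if i = j then hb i else 0)"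
    by (intro sum.cong refl) (simp add: dual)
  then show "(\<Sum>i\<in>UNIV. (X i \<bullet> b) *\<^sub>R hb i) = b" using j by simp
qed

lemma annihilator_lin_complement:
  fixes hb :: "'l::finite \<Rightarrow> 'g::euclidean_space"
  assumes dual: "\<And>i j. X i \<bullet> hb j = (if i = j then 1 else 0)"
  shows "lin_complement (hsub hb) {x. \<forall>i. X i \<bullet> x = 0}"
  unfolding lin_complement_def
proof (intro conjI)
  define P where "P x = (\<Sum>i\<in>UNIV. (X i \<bullet> x) *\<^sub>R hb i)" for x
  have X_P: "X i \<bullet> P x = X i \<bullet> x" for i x
  proof -
    have "X i \<bullet> P x = (\<Sum>i'\<in>UNIV. if i' = i then X i' \<bullet> x else 0)"
      unfolding P_def inner_sum_right by (intro sum.cong refl) (simp add: dual)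
    then show ?thesis by simp
  qed
  show "subspace {x. \<forall>i. X i \<bullet> x = 0}"
    unfolding subspace_def by (simp add: inner_add_right)
  show "hsub hb \<inter> {x. \<forall>i. X i \<bullet> x = 0} = {0}"
  proof (intro equalityI subsetI)
    fix x assume "x \<in> hsub hb \<inter> {x. \<forall>i. X i \<bullet> x = 0}"
    then have x: "x \<in> hsub hb" "\<forall>i. X i \<bullet> x = 0" by auto
    have "x = (\<Sum>i\<in>UNIV. (X i \<bullet> x) *\<^sub>R hb i)"
      using dual_sum_eq_hsub[OF dual x(1)] by simp
    then show "x \<in> {0}" using x(2) by simp
  qed (simp add: hsub_def span_zero)
  show "{x + y |x y. x \<in> hsub hb \<and> y \<in> {x. \<forall>i. X i \<bullet> x = 0}} = UNIV"
  proof (rule UNIV_eq_I[symmetric])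
    fix v
    have "P v \<in> hsub hb"
      unfolding P_def hsub_def by (intro span_sum span_scale span_base) auto
    moreover have "v - P v \<in> {x. \<forall>i. X i \<bullet> x = 0}"
      by (simp add: inner_diff_right X_P)
    ultimately show "v \<in> {x + y |x y. x \<in> hsub hb \<and> y \<in> {x. \<forall>i. X i \<bullet> x = 0}}"
      by force
  qed
qed

lemma bilinear_sum_sum:
  assumes "bilinear \<rho>"
  shows "\<rho> (\<Sum>i\<in>I. s i *\<^sub>R p i) (\<Sum>j\<in>J. t j *\<^sub>R q j) = (\<Sum>i\<in>I. \<Sum>j\<in>J. s i * t j * \<rho> (p i) (q j))"
  by (simp add: bilinear_sum[OF assms] bilinear_lmul[OF assms] bilinear_rmul[OF assms]
      sum.cartesian_product case_prod_beta) (simp add: mult.assoc mult.left_commute)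

lemma sum_skew_antisymmetrize:
  fixes R :: "'a \<Rightarrow> 'a \<Rightarrow> real"
  assumes "\<And>i j. R i j = - R j i"
  shows "(\<Sum>i\<in>I. \<Sum>j\<in>I. s i * t j * R i j) = (\<Sum>i\<in>I. \<Sum>j\<in>I. (R i j / 2) * (s i * t j - s j * t i))"
proof -
  have "(\<Sum>i\<in>I. \<Sum>j\<in>I. R i j * (s j * t i)) = (\<Sum>j\<in>I. \<Sum>i\<in>I. R i j * (s j * t i))"
    by (rule sum.swap)
  also have "\<dots> = (\<Sum>j\<in>I. \<Sum>i\<in>I. - (s j * t i * R j i))"
    by (intro sum.cong refl) (subst assms, simp)
  also have "\<dots> = - (\<Sum>j\<in>I. \<Sum>i\<in>I. s j * t i * R j i)"
    by (simp add: sum_negf)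
  finally have swap: "(\<Sum>i\<in>I. \<Sum>j\<in>I. R i j * (s j * t i)) = - (\<Sum>i\<in>I. \<Sum>j\<in>I. s i * t j * R i j)" .
  have "(\<Sum>i\<in>I. \<Sum>j\<in>I. (R i j / 2) * (s i * t j - s j * t i))
      = ((\<Sum>i\<in>I. \<Sum>j\<in>I. s i * t j * R i j) - (\<Sum>i\<in>I. \<Sum>j\<in>I. R i j * (s j * t i))) / 2"
    by (simp add: sum_divide_distrib sum_subtractf[symmetric] right_diff_distrib diff_divide_distrib mult_ac)
  then show ?thesis using swap by simp
qed

lemma wedge2_expansion_in_frame:
  fixes \<rho> :: "'g::euclidean_space \<Rightarrow> 'g \<Rightarrow> real"
  assumes w: "is_wedge2 \<rho>"
    and frame: "\<And>x. x = (\<Sum>i\<in>I. (x \<bullet> u i) *\<^sub>R p i) + (\<Sum>k\<in>K. (x \<bullet> w k) *\<^sub>R q k)"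
  shows "\<rho> x y = (\<Sum>i\<in>I. \<Sum>j\<in>I. (\<rho> (p i) (p j) / 2) * wedge2 (u i) (u j) x y)
     + (\<Sum>i\<in>I. \<Sum>k\<in>K. \<rho> (p i) (q k) * wedge2 (u i) (w k) x y)
     + (\<Sum>k\<in>K. \<Sum>j\<in>K. (\<rho> (q k) (q j) / 2) * wedge2 (w k) (w j) x y)"
proof -
  have b: "bilinear \<rho>" and skew: "\<And>a b. \<rho> a b = - \<rho> b a"
    using w unfolding is_wedge2_def by blast+
  have "\<rho> x y = \<rho> ((\<Sum>i\<in>I. (x \<bullet> u i) *\<^sub>R p i) + (\<Sum>k\<in>K. (x \<bullet> w k) *\<^sub>R q k))
                  ((\<Sum>i\<in>I. (y \<bullet> u i) *\<^sub>R p i) + (\<Sum>k\<in>K. (y \<bullet> w k) *\<^sub>R q k))"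
    using frame[of x] frame[of y] by simp
  also have "\<dots> = (\<Sum>i\<in>I. \<Sum>j\<in>I. (x \<bullet> u i) * (y \<bullet> u j) * \<rho> (p i) (p j))
      + ((\<Sum>i\<in>I. \<Sum>k\<in>K. (x \<bullet> u i) * (y \<bullet> w k) * \<rho> (p i) (q k))
      + (\<Sum>k\<in>K. \<Sum>i\<in>I. (x \<bullet> w k) * (y \<bullet> u i) * (- \<rho> (p i) (q k))))
      + (\<Sum>k\<in>K. \<Sum>j\<in>K. (x \<bullet> w k) * (y \<bullet> w j) * \<rho> (q k) (q j))"
    by (simp add: bilinear_ladd[OF b] bilinear_radd[OF b] bilinear_sum_sum[OF b] skew[of "q _" "p _"])
  also have "(\<Sum>k\<in>K. \<Sum>i\<in>I. (x \<bullet> w k) * (y \<bullet> u i) * (- \<rho> (p i) (q k)))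
      = (\<Sum>i\<in>I. \<Sum>k\<in>K. (x \<bullet> w k) * (y \<bullet> u i) * (- \<rho> (p i) (q k)))"
    by (rule sum.swap)
  finally show ?thesis
    unfolding wedge2_def
      sum_skew_antisymmetrize[where R = "\<lambda>i j. \<rho> (p i) (p j)", OF skew]
      sum_skew_antisymmetrize[where R = "\<lambda>i j. \<rho> (q i) (q j)", OF skew]
    by (simp add: sum.distrib[symmetric] right_diff_distrib mult_ac)
qed

lemma sharp_bivector_expansion:
  fixes hb :: "'l::finite \<Rightarrow> 'g::euclidean_space" and \<rho> :: "'g \<Rightarrow> 'g \<Rightarrow> real"
  assumes w: "is_wedge2 \<rho>" and exp: "bivector_expansion hb e m a b c \<rho>"
  shows "sharp \<rho> \<xi> =
      (\<Sum>i\<in>UNIV. \<Sum>j\<in>UNIV. a i j *\<^sub>R ((\<xi> \<bullet> hb i) *\<^sub>R hb j - (\<xi> \<bullet> hb j) *\<^sub>R hb i))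
    + (\<Sum>i\<in>UNIV. \<Sum>j<m. b i j *\<^sub>R ((\<xi> \<bullet> hb i) *\<^sub>R e j - (\<xi> \<bullet> e j) *\<^sub>R hb i))
    + (\<Sum>k<m. \<Sum>j<m. c k j *\<^sub>R ((\<xi> \<bullet> e k) *\<^sub>R e j - (\<xi> \<bullet> e j) *\<^sub>R e k))"
    (is "_ = ?VA + ?VB + ?VC")
proof (rule sharp_eqI[OF w])
  fix y
  have "y \<bullet> ?VA = (\<Sum>i\<in>UNIV. \<Sum>j\<in>UNIV. a i j * wedge2 (hb i) (hb j) \<xi> y)"
    unfolding inner_sum_right by (intro sum.cong refl) (simp add: wedge2_def inner_diff_right)
  moreover have "y \<bullet> ?VB = (\<Sum>i\<in>UNIV. \<Sum>j<m. b i j * wedge2 (hb i) (e j) \<xi> y)"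
    unfolding inner_sum_right by (intro sum.cong refl) (simp add: wedge2_def inner_diff_right)
  moreover have "y \<bullet> ?VC = (\<Sum>i<m. \<Sum>j<m. c i j * wedge2 (e i) (e j) \<xi> y)"
    unfolding inner_sum_right by (intro sum.cong refl) (simp add: wedge2_def inner_diff_right)
  ultimately show "\<rho> \<xi> y = y \<bullet> (?VA + ?VB + ?VC)"
    using exp unfolding bivector_expansion_def by (simp add: inner_add_right)
qed

locale complement_basis =
  fixes hb :: "'l::finite \<Rightarrow> 'g::euclidean_space" and M :: "'g set"
    and e :: "nat \<Rightarrow> 'g" and m :: nat
  assumes independent_hb: "independent (range hb)" and inj_hb: "inj hb"
    and complement: "lin_complement (hsub hb) M" and basis: "basis_of e m M"
begin

lemma hsub_Int_M: "hsub hb \<inter> M = {0}"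
  using complement by (simp add: lin_complement_def)

lemma span_e: "span (e ` {..<m}) = M"
  using basis by (simp add: basis_of_def)

lemma independent_hb_e: "independent (range hb \<union> e ` {..<m})"
  using independent_Un[OF independent_hb] basis hsub_Int_M by (simp add: basis_of_def hsub_def)

lemma span_hb_e: "span (range hb \<union> e ` {..<m}) = UNIV"
  using complement by (simp add: span_Un span_e lin_complement_def flip: hsub_def)

lemma covector_with_coords:
  obtains \<xi> where "\<And>i. \<xi> \<bullet> hb i = \<mu> i" and "\<And>k. k < m \<Longrightarrow> \<xi> \<bullet> e k = \<beta> k"
proof -
  have e_notin_hb: "e k \<notin> range hb" if "k < m" for k
  proof
    assume "e k \<in> range hb"
    then have "e k \<in> hsub hb"
      unfolding hsub_def by (rule span_base)
    moreover have "e k \<in> M"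
      unfolding span_e[symmetric] using that by (simp add: span_base)
    ultimately have "e k = 0"
      using hsub_Int_M by (metis IntI singletonD)
    moreover have "e k \<in> range hb \<union> e ` {..<m}"
      using that by simp
    ultimately show False
      using independent_hb_e dependent_zero by metis
  qed
  define f where "f v = (if v \<in> range hb then \<mu> (inv hb v) else \<beta> (inv_into {..<m} e v))" for v
  obtain \<xi> where \<xi>: "\<forall>v\<in>range hb \<union> e ` {..<m}. \<xi> \<bullet> v = f v"
    using covector_extend[OF independent_hb_e] by blast
  show thesis
  proof (rule that)
    show "\<xi> \<bullet> hb i = \<mu> i" for i
      using \<xi> by (simp add: f_def inv_f_f[OF inj_hb])
    show "\<xi> \<bullet> e k = \<beta> k" if "k < m" for k
      using \<xi> that e_notin_hb[OF that] basis unfolding basis_of_def by (simp add: f_def inv_into_f_f)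
  qed
qed

definition dual_frame :: "('l \<Rightarrow> 'g) \<Rightarrow> (nat \<Rightarrow> 'g) \<Rightarrow> bool" where
  "dual_frame X \<eta> \<longleftrightarrow>
     (\<forall>i j. X i \<bullet> hb j = (if i = j then 1 else 0)) \<and> (\<forall>i k. k < m \<longrightarrow> X i \<bullet> e k = 0) \<and>
     (\<forall>k i. \<eta> k \<bullet> hb i = 0) \<and> (\<forall>k j. k < m \<longrightarrow> j < m \<longrightarrow> \<eta> k \<bullet> e j = (if k = j then 1 else 0))"

lemma exists_dual_frame:
  assumes "\<And>i j. X i \<bullet> hb j = (if i = j then 1 else 0)" and "\<And>i k. k < m \<Longrightarrow> X i \<bullet> e k = 0"
  obtains \<eta> where "dual_frame X \<eta>"
proof -
  have "\<exists>\<eta>k. (\<forall>i. \<eta>k \<bullet> hb i = 0) \<and> (\<forall>j<m. \<eta>k \<bullet> e j = (if k = j then 1 else 0))" for k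
    by (rule covector_with_coords[of "\<lambda>_. 0" "\<lambda>j. if k = j then 1 else 0"]) blast
  then obtain \<eta> where
    "\<forall>k. (\<forall>i. \<eta> k \<bullet> hb i = 0) \<and> (\<forall>j<m. \<eta> k \<bullet> e j = (if k = j then 1 else 0))"
    by metis
  then show thesis
    using assms by (intro that[of \<eta>]) (simp add: dual_frame_def)
qed

lemma dual_frame_expansion:
  assumes "dual_frame X \<eta>"
  shows "x = (\<Sum>i\<in>UNIV. (x \<bullet> hb i) *\<^sub>R X i) + (\<Sum>k<m. (x \<bullet> e k) *\<^sub>R \<eta> k)"
    (is "x = ?y")
proof -
  have "x \<bullet> v = ?y \<bullet> v" for v
  proof (rule linear_eq_on[where f = "\<lambda>v. x \<bullet> v" and g = "\<lambda>v. ?y \<bullet> v"])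
    show "linear (\<lambda>v. x \<bullet> v)" "linear (\<lambda>v. ?y \<bullet> v)"
      by (simp_all add: bounded_linear.linear[OF bounded_linear_inner_right])
    show "v \<in> span (range hb \<union> e ` {..<m})"
      by (simp add: span_hb_e)
    show "x \<bullet> b = ?y \<bullet> b" if "b \<in> range hb \<union> e ` {..<m}" for b
      using that assms
      by (auto simp: dual_frame_def inner_add_left inner_sum_left if_distrib[of "\<lambda>c. _ * c"] cong: if_cong)
  qed
  then show ?thesis
    using vector_eq_rdot by blast
qed

lemma bivector_expansion_dual_frame:
  assumes "is_wedge2 \<rho>" and "dual_frame X \<eta>"
  shows "bivector_expansion hb e m (\<lambda>i j. \<rho> (X i) (X j) / 2) (\<lambda>i k. \<rho> (X i) (\<eta> k))
           (\<lambda>k j. \<rho> (\<eta> k) (\<eta> j) / 2) \<rho>"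
  unfolding bivector_expansion_def
  using wedge2_expansion_in_frame[OF assms(1) dual_frame_expansion[OF assms(2)]] by blast

lemma sharp_expansion_components:
  fixes \<rho> :: "'g \<Rightarrow> 'g \<Rightarrow> real"
  assumes w: "is_wedge2 \<rho>" and exp: "bivector_expansion hb e m a b c \<rho>"
    and c_skew: "\<forall>i<m. \<forall>j<m. c i j = - c j i"
  obtains H where "H \<in> hsub hb"
    and "sharp \<rho> \<xi> = H + ((\<Sum>i\<in>UNIV. (\<xi> \<bullet> hb i) *\<^sub>R (\<Sum>j<m. b i j *\<^sub>R e j))
                          + 2 *\<^sub>R (\<Sum>k<m. (\<xi> \<bullet> e k) *\<^sub>R (\<Sum>j<m. c k j *\<^sub>R e j)))"
proof -
  define H where "H = (\<Sum>i\<in>UNIV. \<Sum>j\<in>UNIV. a i j *\<^sub>R ((\<xi> \<bullet> hb i) *\<^sub>R hb j - (\<xi> \<bullet> hb j) *\<^sub>R hb i))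
                    - (\<Sum>i\<in>UNIV. (\<Sum>j<m. b i j * (\<xi> \<bullet> e j)) *\<^sub>R hb i)"
  have "H \<in> hsub hb"
    unfolding H_def hsub_def by (intro span_sum span_scale span_diff span_base) auto
  have VB: "(\<Sum>i\<in>UNIV. \<Sum>j<m. b i j *\<^sub>R ((\<xi> \<bullet> hb i) *\<^sub>R e j - (\<xi> \<bullet> e j) *\<^sub>R hb i))
      = (\<Sum>i\<in>UNIV. (\<xi> \<bullet> hb i) *\<^sub>R (\<Sum>j<m. b i j *\<^sub>R e j))
        - (\<Sum>i\<in>UNIV. (\<Sum>j<m. b i j * (\<xi> \<bullet> e j)) *\<^sub>R hb i)"
    by (simp add: scaleR_diff_right sum_subtractf scaleR_sum_right scaleR_sum_left mult.commute)
  \<comment> \<open>skewness of \<open>c\<close> makes the two halves of the \<open>c\<close>-part equal, whence the factor 2\<close>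
  have swap: "(\<Sum>k<m. \<Sum>j<m. c k j *\<^sub>R (\<xi> \<bullet> e j) *\<^sub>R e k)
      = - (\<Sum>k<m. \<Sum>j<m. c k j *\<^sub>R (\<xi> \<bullet> e k) *\<^sub>R e j)"
  proof -
    have "(\<Sum>k<m. \<Sum>j<m. c k j *\<^sub>R (\<xi> \<bullet> e j) *\<^sub>R e k) = (\<Sum>j<m. \<Sum>k<m. c k j *\<^sub>R (\<xi> \<bullet> e j) *\<^sub>R e k)"
      by (rule sum.swap)
    also have "\<dots> = (\<Sum>j<m. \<Sum>k<m. - (c j k *\<^sub>R (\<xi> \<bullet> e j) *\<^sub>R e k))"
    proof (intro sum.cong refl)
      fix j k assume "j \<in> {..<m}" "k \<in> {..<m}"
      then have "c k j = - c j k" using c_skew by blast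
      then show "c k j *\<^sub>R (\<xi> \<bullet> e j) *\<^sub>R e k = - (c j k *\<^sub>R (\<xi> \<bullet> e j) *\<^sub>R e k)" by simp
    qed
    finally show ?thesis
      by (simp add: sum_negf)
  qed
  have "(\<Sum>k<m. (\<xi> \<bullet> e k) *\<^sub>R (\<Sum>j<m. c k j *\<^sub>R e j))
      = (\<Sum>k<m. \<Sum>j<m. c k j *\<^sub>R (\<xi> \<bullet> e k) *\<^sub>R e j)"
    by (simp add: scaleR_sum_right mult.commute)
  then have VC: "(\<Sum>k<m. \<Sum>j<m. c k j *\<^sub>R ((\<xi> \<bullet> e k) *\<^sub>R e j - (\<xi> \<bullet> e j) *\<^sub>R e k))
      = 2 *\<^sub>R (\<Sum>k<m. (\<xi> \<bullet> e k) *\<^sub>R (\<Sum>j<m. c k j *\<^sub>R e j))"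
    by (simp only: scaleR_diff_right sum_subtractf swap scaleR_2 diff_minus_eq_add)
  show thesis
    by (rule that[OF \<open>H \<in> hsub hb\<close>]) (simp add: sharp_bivector_expansion[OF w exp] VB VC H_def)
qed

lemma sharp_in_hsub_iff:
  fixes \<rho> :: "'g \<Rightarrow> 'g \<Rightarrow> real"
  assumes "is_wedge2 \<rho>" and "bivector_expansion hb e m a b c \<rho>"
    and "\<forall>i<m. \<forall>j<m. c i j = - c j i"
  shows "sharp \<rho> \<xi> \<in> hsub hb \<longleftrightarrow>
           (\<Sum>i\<in>UNIV. (\<xi> \<bullet> hb i) *\<^sub>R (\<Sum>j<m. b i j *\<^sub>R e j))
           + 2 *\<^sub>R (\<Sum>k<m. (\<xi> \<bullet> e k) *\<^sub>R (\<Sum>j<m. c k j *\<^sub>R e j)) = 0"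
    (is "_ \<longleftrightarrow> ?N = 0")
proof -
  obtain H where H: "H \<in> hsub hb" "sharp \<rho> \<xi> = H + ?N"
    using sharp_expansion_components[OF assms] by blast
  have "?N \<in> M"
    unfolding span_e[symmetric] by (intro span_add span_sum span_scale span_base) auto
  have "sharp \<rho> \<xi> \<in> hsub hb \<longleftrightarrow> ?N \<in> hsub hb"
    using H span_add_eq[of H "range hb" ?N] by (simp add: hsub_def)
  also have "\<dots> \<longleftrightarrow> ?N = 0"
  proof
    assume "?N \<in> hsub hb"
    then have "?N \<in> hsub hb \<inter> M" using \<open>?N \<in> M\<close> by simp
    then show "?N = 0" using hsub_Int_M by simp
  qed (simp add: hsub_def span_zero)
  finally show ?thesis .
qed

lemma splittable_imp_coeffs_in_span:
  fixes \<rho> :: "'g \<Rightarrow> 'g \<Rightarrow> real"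
  assumes "splittable hb \<rho>" and "is_wedge2 \<rho>" and "bivector_expansion hb e m a b c \<rho>"
    and "\<forall>i<m. \<forall>j<m. c i j = - c j i"
  shows "(\<Sum>j<m. b i j *\<^sub>R e j) \<in> span {\<Sum>j<m. c k j *\<^sub>R e j | k. k < m}"
proof -
  obtain X where X: "\<And>i j. X i \<bullet> hb j = (if i = j then 1 else 0)" "\<And>i. sharp \<rho> (X i) \<in> hsub hb"
    using splittable_dual_covectors[OF assms(1)] by blast
  define \<xi> where "\<xi> = X i"
  have "(\<Sum>i'\<in>UNIV. (\<xi> \<bullet> hb i') *\<^sub>R (\<Sum>j<m. b i' j *\<^sub>R e j)) = (\<Sum>j<m. b i j *\<^sub>R e j)"
    by (simp add: \<xi>_def X(1) if_distrib[of "\<lambda>t. t *\<^sub>R _"] cong: if_cong)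
  then have "(\<Sum>j<m. b i j *\<^sub>R e j) + 2 *\<^sub>R (\<Sum>k<m. (\<xi> \<bullet> e k) *\<^sub>R (\<Sum>j<m. c k j *\<^sub>R e j)) = 0"
    using sharp_in_hsub_iff[OF assms(2-4), of \<xi>] X(2)[of i] by (simp add: \<xi>_def)
  then have "(\<Sum>j<m. b i j *\<^sub>R e j) = - (2 *\<^sub>R (\<Sum>k<m. (\<xi> \<bullet> e k) *\<^sub>R (\<Sum>j<m. c k j *\<^sub>R e j)))"
    by (rule eq_neg_iff_add_eq_0[THEN iffD2])
  also have "\<dots> \<in> span {\<Sum>j<m. c k j *\<^sub>R e j | k. k < m}"
    by (intro span_neg span_scale span_sum span_base) blast
  finally show ?thesis .
qed

lemma coeffs_in_span_imp_splittable:
  fixes \<rho> :: "'g \<Rightarrow> 'g \<Rightarrow> real"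
  assumes "is_wedge2 \<rho>" and "bivector_expansion hb e m a b c \<rho>"
    and "\<forall>i<m. \<forall>j<m. c i j = - c j i"
    and B_in_span: "\<And>i. (\<Sum>j<m. b i j *\<^sub>R e j) \<in> span {\<Sum>j<m. c k j *\<^sub>R e j | k. k < m}"
  shows "splittable hb \<rho>"
proof -
  have "\<mu> \<in> istar hb ` {\<xi>. sharp \<rho> \<xi> \<in> hsub hb}" for \<mu> :: "real^'l"
  proof -
    have "(\<Sum>i\<in>UNIV. (\<mu> $ i) *\<^sub>R (\<Sum>j<m. b i j *\<^sub>R e j)) \<in> span {\<Sum>j<m. c k j *\<^sub>R e j | k. k < m}"
      by (intro span_sum span_scale B_in_span)
    then obtain \<gamma> where \<gamma>: "(\<Sum>i\<in>UNIV. (\<mu> $ i) *\<^sub>R (\<Sum>j<m. b i j *\<^sub>R e j))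
                           = (\<Sum>k<m. \<gamma> k *\<^sub>R (\<Sum>j<m. c k j *\<^sub>R e j))"
      by (rule span_family_coeffs)
    \<comment> \<open>chosen so that the \<open>M\<close>-component of \<open>\<rho>\<^sup>#\<xi>\<close> cancels\<close>
    obtain \<xi> where \<xi>: "\<And>i. \<xi> \<bullet> hb i = \<mu> $ i" "\<And>k. k < m \<Longrightarrow> \<xi> \<bullet> e k = - \<gamma> k / 2"
      by (rule covector_with_coords[of "\<lambda>i. \<mu> $ i" "\<lambda>k. - \<gamma> k / 2"]) blast
    have "(\<Sum>k<m. (\<xi> \<bullet> e k) *\<^sub>R (\<Sum>j<m. c k j *\<^sub>R e j))
        = - (1/2) *\<^sub>R (\<Sum>k<m. \<gamma> k *\<^sub>R (\<Sum>j<m. c k j *\<^sub>R e j))"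
      unfolding scaleR_sum_right by (intro sum.cong refl) (simp add: \<xi>(2))
    then have "sharp \<rho> \<xi> \<in> hsub hb"
      using sharp_in_hsub_iff[OF assms(1-3), of \<xi>] \<gamma> by (simp add: \<xi>(1))
    moreover have "istar hb \<xi> = \<mu>"
      by (simp add: istar_eq_iff \<xi>(1))
    ultimately show ?thesis by blast
  qed
  then show ?thesis
    unfolding splittable_def by (rule UNIV_eq_I[symmetric])
qed

end

lemma splittable_iff_range_sharp_subset_g_lambda:
  fixes hb :: "'l::finite \<Rightarrow> 'g::euclidean_space"
  assumes w: "is_wedge2 \<rho>" and "independent (range hb)" and "inj hb"
  shows "splittable hb \<rho> \<longleftrightarrow> range (sharp \<rho>) \<subseteq> g_lambda hb \<rho>"
proof
  assume split: "splittable hb \<rho>"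
  show "range (sharp \<rho>) \<subseteq> g_lambda hb \<rho>"
  proof
    fix v assume "v \<in> range (sharp \<rho>)"
    then obtain \<xi> where v: "v = sharp \<rho> \<xi>" by blast
    have "istar hb \<xi> \<in> istar hb ` {\<xi>. sharp \<rho> \<xi> \<in> hsub hb}"
      using split by (simp add: splittable_def)
    then obtain \<xi>' where \<xi>': "istar hb \<xi> = istar hb \<xi>'" "sharp \<rho> \<xi>' \<in> hsub hb"
      by auto
    have "\<xi> - \<xi>' \<in> hperp hb"
      using \<xi>'(1) by (simp add: hperp_iff_istar_eq_0 istar_diff)
    moreover have "v = sharp \<rho> \<xi>' + sharp \<rho> (\<xi> - \<xi>')"
      using v linear_diff[OF linear_sharp[OF w]] by simp
    ultimately show "v \<in> g_lambda hb \<rho>"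
      unfolding g_lambda_def using \<xi>'(2) by blast
  qed
next
  assume sub: "range (sharp \<rho>) \<subseteq> g_lambda hb \<rho>"
  have "\<mu> \<in> istar hb ` {\<xi>. sharp \<rho> \<xi> \<in> hsub hb}" for \<mu>
  proof -
    obtain \<xi> where \<xi>: "istar hb \<xi> = \<mu>"
      using istar_surj assms(2,3) by blast
    have "sharp \<rho> \<xi> \<in> g_lambda hb \<rho>" using sub by blast
    then obtain x \<eta> where x\<eta>: "sharp \<rho> \<xi> = x + sharp \<rho> \<eta>" "x \<in> hsub hb" "\<eta> \<in> hperp hb"
      unfolding g_lambda_def by blast
    have "istar hb (\<xi> - \<eta>) = \<mu>"
      using \<xi> x\<eta>(3) by (simp add: hperp_iff_istar_eq_0 istar_diff)
    moreover have "sharp \<rho> (\<xi> - \<eta>) = x"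
      using x\<eta>(1) linear_diff[OF linear_sharp[OF w]] by simp
    ultimately show ?thesis
      using x\<eta>(2) by blast
  qed
  then show "splittable hb \<rho>"
    unfolding splittable_def by (rule UNIV_eq_I[symmetric])
qed

lemma adapted_bivector_expansion:
  fixes hb :: "'l::finite \<Rightarrow> 'g::euclidean_space" and \<rho> :: "'g \<Rightarrow> 'g \<Rightarrow> real"
  assumes w: "is_wedge2 \<rho>" and ind: "independent (range hb)" "inj hb"
    and dual: "\<And>i j. X i \<bullet> hb j = (if i = j then 1 else 0)"
  obtains M e m a c \<eta> where "lin_complement (hsub hb) M" and "basis_of e m M"
    and "\<forall>i j. a i j = - a j i" and "\<forall>i<m. \<forall>j<m. c i j = - c j i" and "\<And>k i. \<eta> k \<bullet> hb i = 0"
    and "bivector_expansion hb e m a (\<lambda>i k. \<rho> (X i) (\<eta> k)) c \<rho>"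
proof -
  define M where "M = {x. \<forall>i. X i \<bullet> x = 0}"
  have lc: "lin_complement (hsub hb) M"
    unfolding M_def by (rule annihilator_lin_complement[OF dual])
  then obtain e m where bas: "basis_of e m M"
    using basis_of_exists unfolding lin_complement_def by blast
  interpret complement_basis hb M e m
    using ind lc bas by unfold_locales
  have "X i \<bullet> e k = 0" if "k < m" for i k
  proof -
    have "e k \<in> M" unfolding span_e[symmetric] using that by (simp add: span_base)
    then show ?thesis by (simp add: M_def)
  qed
  then obtain \<eta> where \<eta>: "dual_frame X \<eta>"
    using exists_dual_frame[OF dual] by blast
  have skew: "\<rho> x y / 2 = - (\<rho> y x / 2)" for x y
    by (subst is_wedge2_skew[OF w]) simp
  show thesis
  proof (rule that[OF lc bas])
    show "\<forall>i j. \<rho> (X i) (X j) / 2 = - (\<rho> (X j) (X i) / 2)"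
      "\<forall>i<m. \<forall>j<m. \<rho> (\<eta> i) (\<eta> j) / 2 = - (\<rho> (\<eta> j) (\<eta> i) / 2)"
      using skew by blast+
    show "\<eta> k \<bullet> hb i = 0" for k i
      using \<eta> by (simp add: dual_frame_def)
    show "bivector_expansion hb e m (\<lambda>i j. \<rho> (X i) (X j) / 2) (\<lambda>i k. \<rho> (X i) (\<eta> k))
            (\<lambda>k j. \<rho> (\<eta> k) (\<eta> j) / 2) \<rho>"
      by (rule bivector_expansion_dual_frame[OF w \<eta>])
  qed
qed

lemma splittable_iff_coeffs_in_span:
  fixes hb :: "'l::finite \<Rightarrow> 'g::euclidean_space" and \<rho> :: "'g \<Rightarrow> 'g \<Rightarrow> real"
  assumes w: "is_wedge2 \<rho>" and ind: "independent (range hb)" "inj hb"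
  shows "splittable hb \<rho> \<longleftrightarrow>
    (\<forall>M e m. lin_complement (hsub hb) M \<and> basis_of e m M \<longrightarrow>
       (\<forall>(a::'l \<Rightarrow> 'l \<Rightarrow> real) b c. (\<forall>i j. a i j = - a j i) \<and> (\<forall>i<m. \<forall>j<m. c i j = - c j i) \<and>
          bivector_expansion hb e m a b c \<rho> \<longrightarrow>
          (\<forall>i. (\<Sum>j<m. b i j *\<^sub>R e j) \<in> span {\<Sum>j<m. c k j *\<^sub>R e j | k. k < m})))"
  (is "_ \<longleftrightarrow> ?coeffs")
proof
  assume split: "splittable hb \<rho>"
  show ?coeffs
  proof (intro allI impI)
    fix M e m and a :: "'l \<Rightarrow> 'l \<Rightarrow> real" and b c i
    assume "lin_complement (hsub hb) M \<and> basis_of e m M"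
    then interpret complement_basis hb M e m
      using ind by unfold_locales blast+
    assume "(\<forall>i j. a i j = - a j i) \<and> (\<forall>i<m. \<forall>j<m. c i j = - c j i) \<and> bivector_expansion hb e m a b c \<rho>"
    then show "(\<Sum>j<m. b i j *\<^sub>R e j) \<in> span {\<Sum>j<m. c k j *\<^sub>R e j | k. k < m}"
      using splittable_imp_coeffs_in_span[OF split w] by blast
  qed
next
  assume coeffs: ?coeffs
  obtain X where dual: "\<And>i j. X i \<bullet> hb j = (if i = j then 1 else 0)"
    using dual_covectors_exist[OF ind] by blast
  obtain M e m a c \<eta> where lc: "lin_complement (hsub hb) M" and bas: "basis_of e m M"
    and skew: "\<forall>i j. a i j = - a j i" "\<forall>i<m. \<forall>j<m. c i j = - c j i"
    and exp: "bivector_expansion hb e m a (\<lambda>i k. \<rho> (X i) (\<eta> k)) c \<rho>"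
    using adapted_bivector_expansion[OF w ind dual] by metis
  interpret complement_basis hb M e m
    using ind lc bas by unfold_locales
  show "splittable hb \<rho>"
    using coeffs_in_span_imp_splittable[OF w exp skew(2)] coeffs lc bas skew exp by blast
qed

lemma splittable_iff_expansion_without_mixed_terms:
  fixes hb :: "'l::finite \<Rightarrow> 'g::euclidean_space" and \<rho> :: "'g \<Rightarrow> 'g \<Rightarrow> real"
  assumes w: "is_wedge2 \<rho>" and ind: "independent (range hb)" "inj hb"
  shows "splittable hb \<rho> \<longleftrightarrow>
    (\<exists>M e m (a::'l \<Rightarrow> 'l \<Rightarrow> real) c. lin_complement (hsub hb) M \<and> basis_of e m M \<and>
       (\<forall>i j. a i j = - a j i) \<and> (\<forall>i<m. \<forall>j<m. c i j = - c j i) \<and>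
       bivector_expansion hb e m a (\<lambda>_ _. 0) c \<rho>)"
  (is "_ \<longleftrightarrow> ?expansion")
proof
  assume split: "splittable hb \<rho>"
  obtain X where dual: "\<And>i j. X i \<bullet> hb j = (if i = j then 1 else 0)"
    and X: "\<And>i. sharp \<rho> (X i) \<in> hsub hb"
    using splittable_dual_covectors[OF split] by blast
  obtain M e m a c \<eta> where lc: "lin_complement (hsub hb) M" and bas: "basis_of e m M"
    and skew: "\<forall>i j. a i j = - a j i" "\<forall>i<m. \<forall>j<m. c i j = - c j i"
    and \<eta>: "\<And>k i. \<eta> k \<bullet> hb i = 0"
    and exp: "bivector_expansion hb e m a (\<lambda>i k. \<rho> (X i) (\<eta> k)) c \<rho>"
    using adapted_bivector_expansion[OF w ind dual] by metis
  have "\<rho> (X i) (\<eta> k) = 0" for i k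
    using inner_hsub_eq_0[OF \<eta> X] by (simp add: inner_sharp[OF w])
  then have "bivector_expansion hb e m a (\<lambda>_ _. 0) c \<rho>"
    using exp by simp
  then show ?expansion
    using lc bas skew by blast
next
  assume ?expansion
  then obtain M e m and a :: "'l \<Rightarrow> 'l \<Rightarrow> real" and c where lc: "lin_complement (hsub hb) M"
    and bas: "basis_of e m M" and skew: "\<forall>i<m. \<forall>j<m. c i j = - c j i"
    and exp: "bivector_expansion hb e m a (\<lambda>_ _. 0) c \<rho>"
    by blast
  interpret complement_basis hb M e m
    using ind lc bas by unfold_locales
  show "splittable hb \<rho>"
    by (rule coeffs_in_span_imp_splittable[OF w exp skew]) (simp add: span_zero)
qed

lemma splittable_iff_zero_section_subset_Bset:
  "(\<forall>la. splittable hb (r la)) \<longleftrightarrow> {(la, (\<mu>, 0)) | la \<mu>. True} \<subseteq> Bset hb r"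
proof
  assume split: "\<forall>la. splittable hb (r la)"
  show "{(la, (\<mu>, 0)) | la \<mu>. True} \<subseteq> Bset hb r"
  proof clarify
    fix la \<mu>
    have "\<mu> \<in> istar hb ` {\<xi>. sharp (r la) \<xi> \<in> hsub hb}"
      using split by (simp add: splittable_def)
    then obtain \<xi> where "istar hb \<xi> = \<mu>" "sharp (r la) \<xi> \<in> hsub hb"
      by auto
    moreover have "(la, \<mu>, 0) = (la, Lambda_sharp hb r la (sharp (r la) \<xi>, \<xi>))"
      using calculation by (simp add: Lambda_sharp_def)
    ultimately show "(la, \<mu>, 0) \<in> Bset hb r"
      unfolding Bset_def by blast
  qed
next
  assume sub: "{(la, (\<mu>, 0)) | la \<mu>. True} \<subseteq> Bset hb r"
  have "\<mu> \<in> istar hb ` {\<xi>. sharp (r la) \<xi> \<in> hsub hb}" for la \<mu>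
  proof -
    have "(la, (\<mu>, 0)) \<in> Bset hb r"
      using sub by blast
    then obtain h \<xi> where "h \<in> hsub hb" "(\<mu>, 0) = Lambda_sharp hb r la (h, \<xi>)"
      unfolding Bset_def by blast
    then have "istar hb \<xi> = \<mu>" "sharp (r la) \<xi> \<in> hsub hb"
      by (simp_all add: Lambda_sharp_def)
    then show ?thesis by blast
  qed
  then show "\<forall>la. splittable hb (r la)"
    unfolding splittable_def by (blast intro: UNIV_eq_I[symmetric])
qed

theorem proposition2p7:
  fixes br :: "'g::euclidean_space \<Rightarrow> 'g \<Rightarrow> 'g"
    and hb :: "'l::finite \<Rightarrow> 'g"
    and r :: "real^'l \<Rightarrow> 'g \<Rightarrow> 'g \<Rightarrow> real"
  assumes "lie_algebra br"
    and "abelian_subalgebra_basis br hb"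
    and "triangular_dynamical_r_matrix br hb r"
  defines "C1 \<equiv> (\<forall>la. istar hb ` {\<xi>. sharp (r la) \<xi> \<in> hsub hb} = UNIV)"
    and "C2 \<equiv> (\<forall>la. range (sharp (r la)) \<subseteq> g_lambda hb (r la))"
    and "C3 \<equiv> (\<forall>M e m. lin_complement (hsub hb) M \<and> basis_of e m M \<longrightarrow>
               (\<forall>la (a::'l \<Rightarrow> 'l \<Rightarrow> real) (b::'l \<Rightarrow> nat \<Rightarrow> real) (c::nat \<Rightarrow> nat \<Rightarrow> real).
                  (\<forall>i j. a i j = - a j i) \<and> (\<forall>i<m. \<forall>j<m. c i j = - c j i) \<and>
                  (\<forall>x y. r la x y = (\<Sum>i\<in>UNIV. \<Sum>j\<in>UNIV. a i j * wedge2 (hb i) (hb j) x y)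
                                 + (\<Sum>i\<in>UNIV. \<Sum>j<m. b i j * wedge2 (hb i) (e j) x y)
                                 + (\<Sum>i<m. \<Sum>j<m. c i j * wedge2 (e i) (e j) x y))
                  \<longrightarrow> (\<forall>i. (\<Sum>j<m. b i j *\<^sub>R e j) \<in> span {(\<Sum>j<m. c k j *\<^sub>R e j) | k. k < m})))"
    and "C4 \<equiv> (\<forall>la. \<exists>M e m (a::'l \<Rightarrow> 'l \<Rightarrow> real) (c::nat \<Rightarrow> nat \<Rightarrow> real).
               lin_complement (hsub hb) M \<and> basis_of e m M \<and>
               (\<forall>i j. a i j = - a j i) \<and> (\<forall>i<m. \<forall>j<m. c i j = - c j i) \<and>
               (\<forall>x y. r la x y = (\<Sum>i\<in>UNIV. \<Sum>j\<in>UNIV. a i j * wedge2 (hb i) (hb j) x y)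
                              + (\<Sum>i<m. \<Sum>j<m. c i j * wedge2 (e i) (e j) x y)))"
    and "C5 \<equiv> ({(la, (\<mu>, 0)) | la \<mu>. True} \<subseteq> Bset hb r)"
  shows "(C1 \<longleftrightarrow> C2) \<and> (C2 \<longleftrightarrow> C3) \<and> (C3 \<longleftrightarrow> C4) \<and> (C4 \<longleftrightarrow> C5)"
proof -
  have w: "\<And>la. is_wedge2 (r la)"
    using assms(3) unfolding triangular_dynamical_r_matrix_def by blast
  have ind: "independent (range hb)" "inj hb"
    using assms(2) unfolding abelian_subalgebra_basis_def by blast+
  have "C1 \<longleftrightarrow> (\<forall>la. splittable hb (r la))"
    unfolding C1_def splittable_def ..
  moreover have "C2 \<longleftrightarrow> (\<forall>la. splittable hb (r la))"
    unfolding C2_def using splittable_iff_range_sharp_subset_g_lambda[OF w ind] by blast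
  moreover have "C3 \<longleftrightarrow> (\<forall>la. splittable hb (r la))"
    unfolding C3_def splittable_iff_coeffs_in_span[OF w ind] bivector_expansion_def by blast
  moreover have "C4 \<longleftrightarrow> (\<forall>la. splittable hb (r la))"
    unfolding C4_def splittable_iff_expansion_without_mixed_terms[OF w ind] bivector_expansion_def
    by simp
  moreover have "C5 \<longleftrightarrow> (\<forall>la. splittable hb (r la))"
    unfolding C5_def by (rule splittable_iff_zero_section_subset_Bset[symmetric])
  ultimately show ?thesis
    by blast
qed

end
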